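(* Let $X,Y,Z$ be compact Hausdorff spaces, and let $E\subseteq C(X)$ and $F\subseteq C(Y)$ be Riesz subspaces, dense for the supremum norm, which contain the constant functions. Let $\phi:E\times F\to C(Z)$ be a Riesz bimorphism which is bi-injective and satisfies $\phi(\mathbf{1}_X,\mathbf{1}_Y)=\mathbf{1}_Z$. Let $T:C(X\times Y)\to C(Z)$ be a lattice homomorphism with $T(\chi(f,g))=\phi(f,g)$ for all $f\in E$, $g\in F$ (such a $T$ exists and is uniquely determined by $\phi$). Then $T$ is injective.
   Context: For Riesz spaces $E,F,G$, a linear map $T:E\to G$ is a Riesz (lattice) homomorphism if $T(x\vee y)=Tx\vee Ty$ for all $x,y$. A bilinear map $\phi:E\times F\to G$ is a Riesz bimorphism if $\phi(\cdot,y):E\to G$ is a Riesz homomorphism for every $y\in F_+$ and $\phi(x,\cdot):F\to G$ is a Riesz homomorphism for every $x\in E_+$. $\phi$ is bi-injective if $\phi(x,y)=0$ implies $x=0$ or $y=0$. The natural bilinear embedding $\chi:C(X)\times C(Y)\to C(X\times Y)$ is $\chi(f,g)(x,y)=f(x)g(y)$. $\mathbf{1}_X$ denotes the constant function one on $X$. *)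

theory Defs
  imports "HOL-Analysis.Analysis"
begin

definition Cfun :: "('a::topological_space \<Rightarrow> real) set" where
  "Cfun = {f. continuous_on UNIV f}"

definition riesz_subspace :: "('a::topological_space \<Rightarrow> real) set \<Rightarrow> bool" where
  "riesz_subspace E \<longleftrightarrow> E \<subseteq> Cfun \<and> (\<lambda>_. 0) \<in> E \<and>
     (\<forall>f\<in>E. \<forall>g\<in>E. (\<lambda>x. f x + g x) \<in> E) \<and> (\<forall>c::real. \<forall>f\<in>E. (\<lambda>x. c * f x) \<in> E) \<and>
     (\<forall>f\<in>E. \<forall>g\<in>E. sup f g \<in> E)"

definition sup_dense :: "('a::topological_space \<Rightarrow> real) set \<Rightarrow> bool" where
  "sup_dense E \<longleftrightarrow> (\<forall>f\<in>Cfun. \<forall>e>0. \<exists>g\<in>E. \<forall>x. \<bar>f x - g x\<bar> < e)"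

definition riesz_hom_on :: "('a \<Rightarrow> real) set \<Rightarrow> (('a \<Rightarrow> real) \<Rightarrow> ('b \<Rightarrow> real)) \<Rightarrow> bool" where
  "riesz_hom_on A T \<longleftrightarrow>
     (\<forall>f\<in>A. \<forall>g\<in>A. \<forall>a b::real. T (\<lambda>x. a * f x + b * g x) = (\<lambda>z. a * T f z + b * T g z)) \<and>
     (\<forall>f\<in>A. \<forall>g\<in>A. T (sup f g) = sup (T f) (T g))"

definition riesz_bimorphism ::
  "('a::topological_space \<Rightarrow> real) set \<Rightarrow> ('b::topological_space \<Rightarrow> real) set \<Rightarrow>
   (('a \<Rightarrow> real) \<Rightarrow> ('b \<Rightarrow> real) \<Rightarrow> ('c::topological_space \<Rightarrow> real)) \<Rightarrow> bool" where
  "riesz_bimorphism E F \<phi> \<longleftrightarrow>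
     (\<forall>f\<in>E. \<forall>g\<in>F. \<phi> f g \<in> Cfun) \<and>
     (\<forall>g\<in>F. riesz_hom_on E (\<lambda>f. \<phi> f g) \<or> \<not> (\<forall>y. 0 \<le> g y)) \<and>
     (\<forall>f\<in>E. riesz_hom_on F (\<lambda>g. \<phi> f g) \<or> \<not> (\<forall>x. 0 \<le> f x)) \<and>
     (\<forall>g\<in>F. \<forall>f\<in>E. \<forall>f'\<in>E. \<forall>a b::real.
        \<phi> (\<lambda>x. a * f x + b * f' x) g = (\<lambda>z. a * \<phi> f g z + b * \<phi> f' g z)) \<and>
     (\<forall>f\<in>E. \<forall>g\<in>F. \<forall>g'\<in>F. \<forall>a b::real.
        \<phi> f (\<lambda>y. a * g y + b * g' y) = (\<lambda>z. a * \<phi> f g z + b * \<phi> f g' z))"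

definition bi_injective ::
  "('a \<Rightarrow> real) set \<Rightarrow> ('b \<Rightarrow> real) set \<Rightarrow> (('a \<Rightarrow> real) \<Rightarrow> ('b \<Rightarrow> real) \<Rightarrow> ('c \<Rightarrow> real)) \<Rightarrow> bool" where
  "bi_injective E F \<phi> \<longleftrightarrow> (\<forall>f\<in>E. \<forall>g\<in>F. \<phi> f g = (\<lambda>_. 0) \<longrightarrow> f = (\<lambda>_. 0) \<or> g = (\<lambda>_. 0))"

definition chi :: "('a \<Rightarrow> real) \<Rightarrow> ('b \<Rightarrow> real) \<Rightarrow> ('a \<times> 'b \<Rightarrow> real)" where
  "chi f g = (\<lambda>(x, y). f x * g y)"

end

theory Submission
  imports Defs
begin

text \<open>Since T is linear it suffices that T h = 0 forces h = 0. If h is nonzero at a point,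
  then \<open>|h| > \<epsilon>\<close> on an open rectangle U \<times> V. Density and the lattice operations yield
  nonzero f \<in> E and g \<in> F with values in [0,1] vanishing outside U and V, so
  \<open>0 \<le> \<chi>(f,g) \<le> |h|/\<epsilon>\<close>. Positivity of T and \<open>T|h| = |T h| = 0\<close> give
  \<open>\<phi>(f,g) = T(\<chi>(f,g)) = 0\<close>, contradicting bi-injectivity.\<close>

lemma riesz_subspace_Cfun: "riesz_subspace Cfun"
  unfolding riesz_subspace_def Cfun_def sup_fun_def sup_real_def
  by (simp add: continuous_on_add continuous_on_mult_left continuous_on_max)

lemma riesz_subspace_zero: "riesz_subspace A \<Longrightarrow> (\<lambda>_. 0) \<in> A"
  unfolding riesz_subspace_def by blast

lemma riesz_subspace_add:
  assumes "riesz_subspace A" "f \<in> A" "g \<in> A"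
  shows "(\<lambda>x. f x + g x) \<in> A"
  using assms unfolding riesz_subspace_def by blast

lemma riesz_subspace_scale:
  assumes "riesz_subspace A" "f \<in> A"
  shows "(\<lambda>x. c * f x) \<in> A"
  using assms unfolding riesz_subspace_def by blast

lemma riesz_subspace_diff:
  assumes "riesz_subspace A" "f \<in> A" "g \<in> A"
  shows "(\<lambda>x. f x - g x) \<in> A"
  using riesz_subspace_add[OF assms(1,2) riesz_subspace_scale[OF assms(1,3), of "-1"]] by simp

lemma riesz_subspace_sup:
  assumes "riesz_subspace A" "f \<in> A" "g \<in> A"
  shows "sup f g \<in> A"
  using assms unfolding riesz_subspace_def by blast

lemma abs_fun_eq_sup_uminus: "(\<lambda>x. \<bar>h x\<bar>) = sup h (\<lambda>x. - h x :: real)"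
  by (simp add: fun_eq_iff sup_real_def abs_real_def max_def)

lemma riesz_subspace_abs:
  assumes "riesz_subspace A" "h \<in> A"
  shows "(\<lambda>x. \<bar>h x\<bar>) \<in> A"
proof -
  have "(\<lambda>x. - h x) \<in> A"
    using riesz_subspace_scale[OF assms, of "-1"] by simp
  then show ?thesis
    unfolding abs_fun_eq_sup_uminus[of h] by (rule riesz_subspace_sup[OF assms])
qed

context
  fixes A :: "('a::topological_space \<Rightarrow> real) set" and T :: "('a \<Rightarrow> real) \<Rightarrow> ('b \<Rightarrow> real)"
  assumes A: "riesz_subspace A" and T: "riesz_hom_on A T"
begin

lemma riesz_hom_on_lincomb:
  "f \<in> A \<Longrightarrow> g \<in> A \<Longrightarrow> T (\<lambda>x. a * f x + b * g x) = (\<lambda>z. a * T f z + b * T g z)"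
  using T unfolding riesz_hom_on_def by blast

lemma riesz_hom_on_scale: "f \<in> A \<Longrightarrow> T (\<lambda>x. c * f x) = (\<lambda>z. c * T f z)"
  using riesz_hom_on_lincomb[of f f c 0] by simp

lemma riesz_hom_on_diff: "f \<in> A \<Longrightarrow> g \<in> A \<Longrightarrow> T (\<lambda>x. f x - g x) = (\<lambda>z. T f z - T g z)"
  using riesz_hom_on_lincomb[of f g 1 "-1"] by simp

lemma riesz_hom_on_sup: "f \<in> A \<Longrightarrow> g \<in> A \<Longrightarrow> T (sup f g) = sup (T f) (T g)"
  using T unfolding riesz_hom_on_def by blast

lemma riesz_hom_on_zero: "T (\<lambda>_. 0) = (\<lambda>_. 0)"
  using riesz_hom_on_scale[OF riesz_subspace_zero[OF A], of 0] by simp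

lemma riesz_hom_on_nonneg:
  assumes "h \<in> A" "\<And>x. 0 \<le> h x"
  shows "0 \<le> T h z"
proof -
  have "sup h (\<lambda>_. 0) = h"
    using assms(2) by (simp add: sup_fun_def sup_real_def max_absorb1)
  then have "T h = sup (T h) (\<lambda>_. 0)"
    using riesz_hom_on_sup[OF assms(1) riesz_subspace_zero[OF A]] riesz_hom_on_zero by simp
  then show ?thesis
    by (metis sup.cobounded2 le_funD)
qed

lemma riesz_hom_on_mono:
  assumes "f \<in> A" "g \<in> A" "\<And>x. f x \<le> g x"
  shows "T f z \<le> T g z"
  using riesz_hom_on_nonneg[OF riesz_subspace_diff[OF A assms(2,1)], of z]
  by (simp add: riesz_hom_on_diff assms)

lemma riesz_hom_on_abs:
  assumes "h \<in> A"
  shows "T (\<lambda>x. \<bar>h x\<bar>) = (\<lambda>z. \<bar>T h z\<bar>)"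
proof -
  have neg: "(\<lambda>x. - h x) \<in> A"
    using riesz_subspace_scale[OF A assms, of "-1"] by simp
  have "T (\<lambda>x. - h x) = (\<lambda>z. - T h z)"
    using riesz_hom_on_scale[OF assms, of "-1"] by simp
  then show ?thesis
    by (simp only: abs_fun_eq_sup_uminus[of h] abs_fun_eq_sup_uminus[of "T h"]
        riesz_hom_on_sup[OF assms neg])
qed

lemma riesz_hom_on_dominated_by_kernel:
  assumes "h \<in> A" "T h = (\<lambda>_. 0)" "k \<in> A"
    and "\<And>x. 0 \<le> k x" "\<And>x. k x \<le> c * \<bar>h x\<bar>"
  shows "T k = (\<lambda>_. 0)"
proof
  fix z
  have abs_h: "(\<lambda>x. \<bar>h x\<bar>) \<in> A"
    using riesz_subspace_abs[OF A assms(1)] .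
  have "T k z \<le> T (\<lambda>x. c * \<bar>h x\<bar>) z"
    using assms(3,5) abs_h by (intro riesz_hom_on_mono riesz_subspace_scale[OF A])
  also have "\<dots> = 0"
    using riesz_hom_on_scale[OF abs_h] riesz_hom_on_abs[OF assms(1)] assms(2) by simp
  finally show "T k z = 0"
    using riesz_hom_on_nonneg[OF assms(3,4)] by (meson order_antisym)
qed

lemma riesz_hom_on_inj_onI:
  assumes "\<And>h. h \<in> A \<Longrightarrow> T h = (\<lambda>_. 0) \<Longrightarrow> h = (\<lambda>_. 0)"
  shows "inj_on T A"
proof (rule inj_onI)
  fix f g assume fg: "f \<in> A" "g \<in> A" "T f = T g"
  then have "(\<lambda>x. f x - g x) = (\<lambda>_. 0)"
    using assms riesz_subspace_diff[OF A fg(1,2)] riesz_hom_on_diff[OF fg(1,2)] by simp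
  then show "f = g"
    by (simp add: fun_eq_iff)
qed

end

lemma compact_t2_bump:
  fixes x0 :: "'a::t2_space"
  assumes "compact (UNIV::'a set)" "open U" "x0 \<in> U"
  obtains f :: "'a \<Rightarrow> real" where "f \<in> Cfun" "\<And>x. 0 \<le> f x" "\<And>x. f x \<le> 1"
    "f x0 = 1" "\<And>x. x \<notin> U \<Longrightarrow> f x = 0"
proof -
  have "normal_space (euclidean :: 'a topology)"
    using assms(1) hausdorff
    by (intro compact_Hausdorff_or_regular_imp_normal_space)
      (auto simp: compact_space_def Hausdorff_space_def disjnt_def)
  moreover have "closedin euclidean (- U)"
    using assms(2) by (simp add: closed_Compl)
  ultimately obtain f where "continuous_map euclidean (top_of_set {0..1::real}) f"
    "f ` (- U) \<subseteq> {0}" "f ` {x0} \<subseteq> {1}"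
    using Urysohn_lemma[of euclidean "-U" "{x0}" 0 1] assms(3) by (auto simp: disjnt_def)
  then show ?thesis
    by (intro that[of f]) (auto simp: Cfun_def continuous_map_in_subtopology)
qed

text \<open>Cutting an approximation \<open>f\<close> of a [0,1]-valued bump down to \<open>max (f - 1/3) 0\<close> restores
  exact vanishing outside \<open>U\<close> while staying inside the Riesz subspace.\<close>
lemma sup_dense_riesz_subspace_bump:
  fixes x0 :: "'a::t2_space"
  assumes "compact (UNIV::'a set)" "open U" "x0 \<in> U"
    and E: "riesz_subspace E" "sup_dense E" "\<And>c. (\<lambda>_. c) \<in> E"
  obtains f where "f \<in> E" "\<And>x. 0 \<le> f x" "\<And>x. f x \<le> 1"
    "0 < f x0" "\<And>x. x \<notin> U \<Longrightarrow> f x = 0"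
proof -
  obtain f0 where f0: "f0 \<in> Cfun" "\<And>x. 0 \<le> f0 x" "\<And>x. f0 x \<le> 1"
    "f0 x0 = 1" "\<And>x. x \<notin> U \<Longrightarrow> f0 x = 0"
    using compact_t2_bump[OF assms(1-3)] by blast
  obtain g where g: "g \<in> E" "\<And>x. \<bar>f0 x - g x\<bar> < 1/3"
    using E(2) f0(1) unfolding sup_dense_def by (meson zero_less_divide_1_iff zero_less_numeral)
  define f where "f = sup (\<lambda>x. g x - 1/3) (\<lambda>_. 0)"
  have f_eq: "f x = max (g x - 1/3) 0" for x
    by (simp add: f_def sup_fun_def sup_real_def)
  have g_near: "f0 x - 1/3 < g x" "g x < f0 x + 1/3" for x
    using g(2)[of x] unfolding abs_less_iff by linarith+
  show ?thesis
  proof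
    show "f \<in> E"
      unfolding f_def
      by (intro riesz_subspace_sup riesz_subspace_diff[OF E(1) g(1) E(3)] riesz_subspace_zero E(1))
    show "0 \<le> f x" "f x \<le> 1" for x
      using g_near[of x] f0(3)[of x] by (auto simp: f_eq)
    show "0 < f x0"
      using g_near[of x0] f0(4) by (auto simp: f_eq)
    show "f x = 0" if "x \<notin> U" for x
      using g_near[of x] f0(5)[OF that] by (auto simp: f_eq)
  qed
qed

lemma chi_in_Cfun:
  assumes "f \<in> Cfun" "g \<in> Cfun"
  shows "chi f g \<in> Cfun"
proof -
  have "continuous_on UNIV (\<lambda>p. f (fst p))"
    using continuous_on_compose2[OF _ continuous_on_fst[OF continuous_on_id], of UNIV f] assms(1)
    by (simp add: Cfun_def)
  moreover have "continuous_on UNIV (\<lambda>p. g (snd p))"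
    using continuous_on_compose2[OF _ continuous_on_snd[OF continuous_on_id], of UNIV g] assms(2)
    by (simp add: Cfun_def)
  ultimately have "continuous_on UNIV (\<lambda>p. f (fst p) * g (snd p))"
    by (rule continuous_on_mult)
  then show ?thesis
    by (simp add: chi_def Cfun_def case_prod_unfold)
qed

lemma nonzero_Cfun_dominates_chi:
  fixes h :: "'x::t2_space \<times> 'y::t2_space \<Rightarrow> real"
  assumes "compact (UNIV :: 'x set)" "compact (UNIV :: 'y set)"
    and E: "riesz_subspace E" "sup_dense E" "\<And>c. (\<lambda>_. c) \<in> E"
    and F: "riesz_subspace F" "sup_dense F" "\<And>c. (\<lambda>_. c) \<in> F"
    and h: "h \<in> Cfun" "h p0 \<noteq> 0"
  obtains f g c where "f \<in> E" "g \<in> F" "f \<noteq> (\<lambda>_. 0)" "g \<noteq> (\<lambda>_. 0)"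
    "\<And>p. 0 \<le> chi f g p" "\<And>p. chi f g p \<le> c * \<bar>h p\<bar>"
proof -
  define \<epsilon> where "\<epsilon> = \<bar>h p0\<bar> / 2"
  have "0 < \<epsilon>"
    using h(2) by (simp add: \<epsilon>_def)
  have "open {p. \<epsilon> < \<bar>h p\<bar>}"
    using h(1) by (auto simp: Cfun_def intro!: open_Collect_less continuous_intros)
  moreover have "p0 \<in> {p. \<epsilon> < \<bar>h p\<bar>}"
    using \<open>0 < \<epsilon>\<close> by (simp add: \<epsilon>_def)
  ultimately obtain U V where UV: "open U" "open V" "p0 \<in> U \<times> V" "U \<times> V \<subseteq> {p. \<epsilon> < \<bar>h p\<bar>}"
    by (metis open_prod_elim)
  obtain x0 y0 where "x0 \<in> U" "y0 \<in> V"
    using UV(3) by blast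
  obtain f where f: "f \<in> E" "\<And>x. 0 \<le> f x" "\<And>x. f x \<le> 1"
    "0 < f x0" "\<And>x. x \<notin> U \<Longrightarrow> f x = 0"
    using sup_dense_riesz_subspace_bump[OF assms(1) UV(1) \<open>x0 \<in> U\<close> E] by blast
  obtain g where g: "g \<in> F" "\<And>y. 0 \<le> g y" "\<And>y. g y \<le> 1"
    "0 < g y0" "\<And>y. y \<notin> V \<Longrightarrow> g y = 0"
    using sup_dense_riesz_subspace_bump[OF assms(2) UV(2) \<open>y0 \<in> V\<close> F] by blast
  have "chi f g p \<le> (1 / \<epsilon>) * \<bar>h p\<bar>" for p
  proof (cases "p \<in> U \<times> V")
    case True
    then have "\<epsilon> < \<bar>h p\<bar>"
      using UV(4) by blast
    then have "1 \<le> (1 / \<epsilon>) * \<bar>h p\<bar>"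
      using \<open>0 < \<epsilon>\<close> by simp
    moreover have "chi f g p \<le> 1"
      using f(2,3) g(2,3) by (simp add: chi_def case_prod_unfold mult_le_one)
    ultimately show ?thesis
      by linarith
  next
    case False
    then have "chi f g p = 0"
      using f(5) g(5) by (cases p) (auto simp: chi_def)
    then show ?thesis
      using \<open>0 < \<epsilon>\<close> by simp
  qed
  moreover have "0 \<le> chi f g p" for p
    using f(2) g(2) by (simp add: chi_def case_prod_unfold)
  moreover have "f \<noteq> (\<lambda>_. 0)" "g \<noteq> (\<lambda>_. 0)"
    using f(4) g(4) by auto
  ultimately show ?thesis
    using f(1) g(1) by (intro that[of f g "1 / \<epsilon>"]) auto
qed

theorem proposition3p3:
  fixes E :: "('x::t2_space \<Rightarrow> real) set"
    and F :: "('y::t2_space \<Rightarrow> real) set"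
    and \<phi> :: "('x \<Rightarrow> real) \<Rightarrow> ('y \<Rightarrow> real) \<Rightarrow> ('z::t2_space \<Rightarrow> real)"
    and T :: "('x \<times> 'y \<Rightarrow> real) \<Rightarrow> ('z \<Rightarrow> real)"
  assumes cX: "compact (UNIV :: 'x set)"
    and cY: "compact (UNIV :: 'y set)"
    and cZ: "compact (UNIV :: 'z set)"
    and E: "riesz_subspace E" "sup_dense E" "\<And>c. (\<lambda>_. c) \<in> E"
    and F: "riesz_subspace F" "sup_dense F" "\<And>c. (\<lambda>_. c) \<in> F"
    and phi: "riesz_bimorphism E F \<phi>" "bi_injective E F \<phi>"
    and phi1: "\<phi> (\<lambda>_. 1) (\<lambda>_. 1) = (\<lambda>_. 1)"
    and T: "\<forall>h\<in>Cfun. T h \<in> Cfun" "riesz_hom_on Cfun T"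
    and Tchi: "\<forall>f\<in>E. \<forall>g\<in>F. T (chi f g) = \<phi> f g"
  shows "inj_on T Cfun"
proof (rule riesz_hom_on_inj_onI[OF riesz_subspace_Cfun T(2)])
  fix h assume h: "h \<in> Cfun" "T h = (\<lambda>_. 0)"
  show "h = (\<lambda>_. 0)"
  proof (rule ccontr)
    assume "h \<noteq> (\<lambda>_. 0)"
    then obtain p0 where "h p0 \<noteq> 0"
      by (meson ext)
    then obtain f g c where fg: "f \<in> E" "g \<in> F" "f \<noteq> (\<lambda>_. 0)" "g \<noteq> (\<lambda>_. 0)"
      "\<And>p. 0 \<le> chi f g p" "\<And>p. chi f g p \<le> c * \<bar>h p\<bar>"
      using nonzero_Cfun_dominates_chi[OF cX cY E F h(1)] by blast
    have "chi f g \<in> Cfun"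
      using E(1) F(1) fg(1,2) by (intro chi_in_Cfun) (auto simp: riesz_subspace_def)
    then have "T (chi f g) = (\<lambda>_. 0)"
      by (rule riesz_hom_on_dominated_by_kernel[OF riesz_subspace_Cfun T(2) h _ fg(5,6)])
    then have "\<phi> f g = (\<lambda>_. 0)"
      using Tchi fg(1,2) by simp
    then show False
      using phi(2) fg(1-4) unfolding bi_injective_def by blast
  qed
qed

end
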